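(* Let $X$ be a separable absolutely neighbourhood star-Menger space. If $Y$ is a closed and discrete subset of $X$, then $|Y|<\mathfrak{d}$.
   Context: All spaces are regular. $St(A,\mathcal{U})=\bigcup\{U\in\mathcal{U}:U\cap A\neq\emptyset\}$. $\mathfrak{d}$ is the dominating number. $X$ is absolutely neighbourhood star-Menger if for each sequence $(\mathcal{U}_n:n\in\omega)$ of open covers of $X$ and each dense subset $D$ of $X$ there is a sequence $(F_n:n\in\omega)$ of finite subsets of $D$ such that for any open sets $O_n$ with $F_n\subseteq O_n$ ($n\in\omega$), $\{St(O_n,\mathcal{U}_n):n\in\omega\}$ covers $X$. *)

theory Defs
  imports "HOL-Analysis.Analysis"
begin

definition St :: "'a set \<Rightarrow> 'a set set \<Rightarrow> 'a set" where
  "St A \<U> = \<Union>{U \<in> \<U>. U \<inter> A \<noteq> {}}"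

definition open_cover :: "'a topology \<Rightarrow> 'a set set \<Rightarrow> bool" where
  "open_cover X \<U> \<longleftrightarrow> (\<forall>U\<in>\<U>. openin X U) \<and> \<Union>\<U> = topspace X"

definition dense_in :: "'a topology \<Rightarrow> 'a set \<Rightarrow> bool" where
  "dense_in X D \<longleftrightarrow> D \<subseteq> topspace X \<and> X closure_of D = topspace X"

definition abs_nbhd_star_Menger :: "'a topology \<Rightarrow> bool" where
  "abs_nbhd_star_Menger X \<longleftrightarrow>
     (\<forall>\<U> :: nat \<Rightarrow> 'a set set. \<forall>D.
        (\<forall>n. open_cover X (\<U> n)) \<and> dense_in X D \<longrightarrow>
        (\<exists>F :: nat \<Rightarrow> 'a set. (\<forall>n. finite (F n) \<and> F n \<subseteq> D) \<and>
           (\<forall>W :: nat \<Rightarrow> 'a set. (\<forall>n. openin X (W n) \<and> F n \<subseteq> W n) \<longrightarrow>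
              topspace X \<subseteq> (\<Union>n. St (W n) (\<U> n)))))"

definition dominating :: "(nat \<Rightarrow> nat) set \<Rightarrow> bool" where
  "dominating \<D> \<longleftrightarrow> (\<forall>f. \<exists>g\<in>\<D>. \<forall>\<^sub>F n in sequentially. f n \<le> g n)"

text \<open>|Y| < d, where d is the least cardinality of a dominating family:
  equivalently |Y| is strictly below the cardinality of every dominating family.\<close>
definition card_less_dominating :: "'a set \<Rightarrow> bool" where
  "card_less_dominating Y \<longleftrightarrow> (\<forall>\<D>. dominating \<D> \<longrightarrow> ordLess2 (card_of Y) (card_of \<D>))"

end

theory Submission
  imports Defs "HOL-Library.Countable_Set_Type"
begin

text \<open>Suppose \<open>\<D>\<close> is dominating and \<open>|\<D>| \<le> |Y|\<close>. Fix a countable dense set \<open>D\<close>, enumerated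
  as \<open>d\<^sub>0, d\<^sub>1, \<dots>\<close>. Since \<open>\<D>\<close> is uncountable, the points of \<open>Y - D\<close> can be labelled by
  functions \<open>h\<^sub>y = f + k\<close> with \<open>f \<in> \<D>\<close>, \<open>k \<in> \<nat>\<close>, each such function occurring. For the \<open>n\<close>-th
  cover, shrink an isolating neighbourhood of each \<open>y \<in> Y\<close> so that it misses a neighbourhood of each
  \<open>d\<^sub>i \<noteq> y\<close> with \<open>i \<le> h\<^sub>y(n)\<close>; together with \<open>X - Y\<close> this gives an open cover. The finite
  sets \<open>F\<^sub>n \<subseteq> D\<close> delivered by the star-Menger property have index bounds \<open>g(n)\<close>, and
  some \<open>h\<^sub>y\<close> bounds \<open>g\<close> everywhere. Taking \<open>O\<^sub>n\<close> to be the union of those neighbourhoods of the points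
  of \<open>F\<^sub>n\<close>, the star of \<open>O\<^sub>n\<close> never reaches \<open>y\<close>: the only member of the \<open>n\<close>-th cover
  containing \<open>y\<close> is its shrunk neighbourhood, which misses \<open>O\<^sub>n\<close>.\<close>

lemma countable_not_dominating:
  assumes "countable \<D>" shows "\<not> dominating \<D>"
proof
  assume dom: "dominating \<D>"
  then have "\<D> \<noteq> {}" unfolding dominating_def by blast
  define e where "e = from_nat_into \<D>"
  have range_e: "range e = \<D>" unfolding e_def by (rule range_from_nat_into[OF \<open>\<D> \<noteq> {}\<close> assms])
  define g where "g n = Suc (\<Sum>i\<le>n. e i n)" for n
  obtain i N where "\<And>n. n \<ge> N \<Longrightarrow> g n \<le> e i n"
    using dom range_e unfolding dominating_def eventually_sequentially by blast
  moreover have "e i n < g n" if "i \<le> n" for n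
  proof -
    have "e i n \<le> (\<Sum>j\<le>n. e j n)" using that by (intro member_le_sum) auto
    then show ?thesis unfolding g_def by simp
  qed
  ultimately show False
    using not_le by blast
qed

lemma dominating_everywhere_up_to_shift:
  assumes "dominating \<D>"
  obtains f k where "f \<in> \<D>" "\<And>n. g n \<le> f n + k"
proof -
  obtain f N where f: "f \<in> \<D>" and N: "\<And>n. n \<ge> N \<Longrightarrow> g n \<le> f n"
    using assms unfolding dominating_def eventually_sequentially by blast
  have "g n \<le> f n + (\<Sum>m<N. g m)" for n
  proof (cases "n < N")
    case True
    then have "g n \<le> (\<Sum>m<N. g m)" by (intro member_le_sum) auto
    then show ?thesis by simp
  next
    case False
    then show ?thesis using N[of n] by simp
  qed
  with f that show thesis by blast
qed

context includes cardinal_syntax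
begin

lemma card_of_le_Diff_countable:
  assumes "\<not> countable Y" "countable D"
  shows "|Y| \<le>o |Y - D|"
proof -
  have "\<not> countable (Y - D)"
  proof
    assume "countable (Y - D)"
    then have "countable ((Y - D) \<union> D)" using assms(2) by (rule countable_Un)
    then show False using assms(1) countable_subset[of Y "(Y - D) \<union> D"] by blast
  qed
  then have inf: "\<not> finite (Y - D)"
    using countable_finite by blast
  have "|Y \<inter> D| \<le>o |UNIV::nat set|"
    using countable_card_of_nat countable_Int2[OF assms(2)] by blast
  also have "|UNIV::nat set| \<le>o |Y - D|"
    using inf infinite_iff_card_of_nat by blast
  finally have "|(Y - D) \<union> (Y \<inter> D)| \<le>o |Y - D|"
    using inf by (intro card_of_Un_ordLeq_infinite_Field)
      (simp_all add: Field_card_of card_of_card_order_on ordLeq_refl[OF card_of_Card_order])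
  then show ?thesis by (simp add: Un_Diff_Int)
qed

lemma surj_onto_Times_nat_if_card_of_le:
  assumes "\<not> countable \<D>" "|\<D>| \<le>o |Y|" "countable D"
  obtains \<phi> where "\<phi> ` (Y - D) = \<D> \<times> (UNIV :: nat set)"
proof -
  have "\<not> countable Y"
    using assms(1,2) countable_ordLeq by blast
  have "|UNIV::nat set| \<le>o |\<D>|"
    using assms(1) countable_finite infinite_iff_card_of_nat by blast
  then have "|\<D> \<times> (UNIV::nat set)| =o |\<D>|"
    using assms(1) countable_finite card_of_Times_infinite by blast
  also note assms(2)
  also have "|Y| \<le>o |Y - D|"
    using \<open>\<not> countable Y\<close> assms(3) by (rule card_of_le_Diff_countable)
  finally have "|\<D> \<times> (UNIV::nat set)| \<le>o |Y - D|" .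
  moreover have "\<D> \<noteq> {}"
    using assms(1) by auto
  ultimately show thesis
    using card_of_ordLeq2[of "\<D> \<times> (UNIV::nat set)" "Y - D"] that by auto
qed

end

lemma discrete_subtopology_isolating_nbhds:
  assumes "subtopology X Y = discrete_topology Y"
  obtains U where "\<And>y. y \<in> Y \<Longrightarrow> openin X (U y)" "\<And>y. y \<in> Y \<Longrightarrow> U y \<inter> Y = {y}"
proof -
  have "\<exists>U. openin X U \<and> U \<inter> Y = {y}" if "y \<in> Y" for y
  proof -
    have "openin (subtopology X Y) {y}" using assms that by simp
    then show ?thesis unfolding openin_subtopology by blast
  qed
  then show thesis using that by metis
qed

lemma Hausdorff_space_separating_nbhds:
  assumes "Hausdorff_space X"
  obtains A B where
    "\<And>x y. \<lbrakk>x \<in> topspace X; y \<in> topspace X; x \<noteq> y\<rbrakk> \<Longrightarrow>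
       openin X (A x y) \<and> openin X (B x y) \<and> x \<in> A x y \<and> y \<in> B x y \<and> disjnt (A x y) (B x y)"
proof -
  have "\<forall>x y. \<exists>S T. x \<in> topspace X \<and> y \<in> topspace X \<and> x \<noteq> y \<longrightarrow>
          openin X S \<and> openin X T \<and> x \<in> S \<and> y \<in> T \<and> disjnt S T"
    using assms unfolding Hausdorff_space_def by blast
  then show thesis using that by metis
qed

lemma finite_to_nat_on_le:
  assumes "countable D" shows "finite {d \<in> D. to_nat_on D d \<le> m}"
proof (rule finite_imageD)
  show "finite (to_nat_on D ` {d \<in> D. to_nat_on D d \<le> m})"
    by (rule finite_subset[of _ "{..m}"]) auto
  show "inj_on (to_nat_on D) {d \<in> D. to_nat_on D d \<le> m}"
    using inj_on_to_nat_on[OF assms] by (rule inj_on_subset) blast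
qed

lemma open_cover_insert_complement:
  assumes "closedin X Y" "\<And>y. y \<in> Y \<Longrightarrow> openin X (V y) \<and> y \<in> V y"
  shows "open_cover X (insert (topspace X - Y) (V ` Y))"
proof -
  have "openin X (topspace X - Y)"
    using assms(1) closedin_def by blast
  then have opens: "\<forall>U \<in> insert (topspace X - Y) (V ` Y). openin X U"
    using assms(2) by blast
  then have "\<Union>(insert (topspace X - Y) (V ` Y)) \<subseteq> topspace X"
    using openin_subset by blast
  moreover have "topspace X \<subseteq> \<Union>(insert (topspace X - Y) (V ` Y))"
    using assms(2) by blast
  ultimately show ?thesis
    using opens unfolding open_cover_def by blast
qed

lemma St_insert_complement:
  assumes "y \<in> St W (insert (topspace X - Y) (V ` Y))" "y \<in> Y"
    and "\<And>y'. y' \<in> Y \<Longrightarrow> V y' \<inter> Y \<subseteq> {y'}"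
  shows "V y \<inter> W \<noteq> {}"
proof -
  obtain T where T: "T \<in> insert (topspace X - Y) (V ` Y)" "T \<inter> W \<noteq> {}" "y \<in> T"
    using assms(1) unfolding St_def by blast
  then obtain y' where "y' \<in> Y" "T = V y'"
    using assms(2) by auto
  moreover from this have "y' = y"
    using T(3) assms(2,3) by blast
  ultimately show ?thesis using T(2) by simp
qed

lemma abs_nbhd_star_Menger_closed_discrete_escapes:
  fixes h :: "'a \<Rightarrow> nat \<Rightarrow> nat"
  assumes "Hausdorff_space X" "abs_nbhd_star_Menger X"
    and "closedin X Y" "subtopology X Y = discrete_topology Y"
    and "countable D" "dense_in X D"
  shows "\<exists>g. \<forall>y \<in> Y - D. \<exists>n. h y n < g n"
proof -
  have Y: "Y \<subseteq> topspace X" and D: "D \<subseteq> topspace X"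
    using assms(3,6) closedin_subset unfolding dense_in_def by auto
  obtain U where U: "\<And>y. y \<in> Y \<Longrightarrow> openin X (U y)" "\<And>y. y \<in> Y \<Longrightarrow> U y \<inter> Y = {y}"
    using discrete_subtopology_isolating_nbhds[OF assms(4)] by blast
  obtain A B where AB: "\<And>x y. \<lbrakk>x \<in> topspace X; y \<in> topspace X; x \<noteq> y\<rbrakk> \<Longrightarrow>
       openin X (A x y) \<and> openin X (B x y) \<and> x \<in> A x y \<and> y \<in> B x y \<and> disjnt (A x y) (B x y)"
    using Hausdorff_space_separating_nbhds[OF assms(1)] by blast
  define K where "K m = {d \<in> D. to_nat_on D d \<le> m}" for m
  define V where "V y n = U y \<inter> \<Inter>((\<lambda>d. B d y) ` (K (h y n) - {y}))" for y n
  define \<U> where "\<U> n = insert (topspace X - Y) ((\<lambda>y. V y n) ` Y)" for n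
  have V: "openin X (V y n) \<and> y \<in> V y n" if "y \<in> Y" for y n
  proof -
    have "finite (K (h y n) - {y})"
      using finite_to_nat_on_le[OF assms(5)] unfolding K_def by blast
    moreover have "openin X (B d y) \<and> y \<in> B d y" if "d \<in> K (h y n) - {y}" for d
      using that AB[of d y] D Y \<open>y \<in> Y\<close> unfolding K_def by blast
    ultimately show ?thesis
      using U \<open>y \<in> Y\<close> unfolding V_def by (auto intro!: openin_Int_Inter)
  qed
  have "open_cover X (\<U> n)" for n
    unfolding \<U>_def using assms(3) V by (rule open_cover_insert_complement)
  then obtain F where F: "\<And>n. finite (F n) \<and> F n \<subseteq> D"
    and star: "\<And>W. (\<And>n. openin X (W n) \<and> F n \<subseteq> W n) \<Longrightarrow> topspace X \<subseteq> (\<Union>n. St (W n) (\<U> n))"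
    using assms(2,6) unfolding abs_nbhd_star_Menger_def by meson
  define g where "g n = (\<Sum>d\<in>F n. to_nat_on D d)" for n
  have "\<exists>n. h y n < g n" if y: "y \<in> Y" "y \<notin> D" for y
  proof (rule ccontr)
    assume bounded: "\<nexists>n. h y n < g n"
    have "F n \<subseteq> K (h y n) - {y}" for n
    proof
      fix d assume d: "d \<in> F n"
      have "to_nat_on D d \<le> g n"
        unfolding g_def using F[of n] d by (intro member_le_sum) auto
      also have "g n \<le> h y n"
        using bounded not_less by blast
      finally show "d \<in> K (h y n) - {y}"
        using F[of n] d y(2) unfolding K_def by blast
    qed
    define W where "W n = \<Union>((\<lambda>d. A d y) ` F n)" for n
    have "openin X (A d y) \<and> d \<in> A d y" if "d \<in> F n" for d n
      using AB[of d y] that F[of n] y Y D by blast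
    then have "openin X (W n) \<and> F n \<subseteq> W n" for n
      unfolding W_def by (auto intro!: openin_Union)
    then obtain n where "y \<in> St (W n) (\<U> n)"
      using star[of W] y Y by blast
    moreover have "V y' n \<inter> Y \<subseteq> {y'}" if "y' \<in> Y" for y'
      using U(2) that unfolding V_def by blast
    ultimately have "V y n \<inter> W n \<noteq> {}"
      using St_insert_complement[of y "W n" X Y "\<lambda>y'. V y' n"] y(1) unfolding \<U>_def by blast
    then obtain z d where "z \<in> V y n" "d \<in> F n" "z \<in> A d y"
      unfolding W_def by blast
    moreover have "d \<in> K (h y n) - {y}" "d \<in> topspace X"
      using \<open>\<And>n. F n \<subseteq> K (h y n) - {y}\<close> F D \<open>d \<in> F n\<close> by blast+
    ultimately show False
      using AB[of d y] y Y unfolding V_def by (auto simp: disjnt_iff)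
  qed
  then show ?thesis by blast
qed

theorem mainTheorem8:
  fixes X :: "'a topology" and Y :: "'a set"
  assumes "regular_space X" and "t1_space X"
    and "separable_space X"
    and "abs_nbhd_star_Menger X"
    and "closedin X Y"
    and "subtopology X Y = discrete_topology Y"
  shows "card_less_dominating Y"
  unfolding card_less_dominating_def
proof (intro allI impI)
  fix \<D> assume dom: "dominating \<D>"
  obtain D where D: "countable D" "dense_in X D"
    using assms(3) unfolding separable_space_def dense_in_def by blast
  show "ordLess2 (card_of Y) (card_of \<D>)"
  proof (rule ccontr)
    assume "\<not> ordLess2 (card_of Y) (card_of \<D>)"
    have "\<not> countable \<D>"
      using countable_not_dominating dom by blast
    moreover have "ordLeq3 (card_of \<D>) (card_of Y)"
      using \<open>\<not> ordLess2 (card_of Y) (card_of \<D>)\<close>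
        not_ordLess_iff_ordLeq[OF card_of_Well_order card_of_Well_order] by blast
    ultimately obtain \<phi> where \<phi>: "\<phi> ` (Y - D) = \<D> \<times> (UNIV :: nat set)"
      using D(1) by (rule surj_onto_Times_nat_if_card_of_le)
    have "Hausdorff_space X"
      using assms(1,2) regular_t1_imp_Hausdorff_space by blast
    then obtain g where g: "\<forall>y \<in> Y - D. \<exists>n. fst (\<phi> y) n + snd (\<phi> y) < g n"
      using abs_nbhd_star_Menger_closed_discrete_escapes[where h = "\<lambda>y n. fst (\<phi> y) n + snd (\<phi> y)"]
        assms(4-6) D by blast
    obtain f k where "f \<in> \<D>" and fk: "\<And>n. g n \<le> f n + k"
      using dominating_everywhere_up_to_shift[OF dom] by blast
    then obtain y where "y \<in> Y - D" "\<phi> y = (f, k)"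
      using \<phi> by (metis UNIV_I mem_Sigma_iff imageE)
    then obtain n where "f n + k < g n"
      using g by (metis fst_conv snd_conv)
    then show False
      using fk[of n] by simp
  qed
qed

end
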